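(* Let $\mathfrak{A}$ be a $(\circ,\wedge,\mathsf{A})$-algebra that is representable by partial functions and atomic. Let $\varphi$ be the first-order sentence asserting: for all $a,b,c$, if $a\circ x\le c$ for every atom $x$ with $x\le b$, then $a\circ b\le c$. Then composition in $\mathfrak{A}$ is completely left-distributive over joins if and only if $\mathfrak{A}\models\varphi$.
   Context: A $(\circ,\wedge,\mathsf{A})$-algebra is a set with two binary operations $\circ,\wedge$ and one unary operation $\mathsf{A}$. An algebra of partial functions of this signature is a set of partial functions, with base $X$ the union of all their domains and ranges, closed under: composition $f\circ g=\{(x,z)\mid \exists y\,(x,y)\in f,(y,z)\in g\}$; intersection; antidomain $\mathsf{A}(f)=\{(x,x)\mid x\in X, x\notin\mathrm{dom}(f)\}$. A representation by partial functions is an isomorphism onto such an algebra. The order is $a\le b\iff a\wedge b=a$, with least element $0=\mathsf{A}(a)\circ a$. An atom is a minimal nonzero element; $\mathfrak{A}$ is atomic if every nonzero element is above an atom. Composition is completely left-distributive over joins if for every $a\in\mathfrak{A}$ and every $S\subseteq\mathfrak{A}$ such that $\bigvee S$ exists, $\bigvee\{a\circ s\mid s\in S\}$ exists and equals $a\circ\bigvee S$. *)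

theory Defs
  imports Main
begin

definition base_of :: "('a \<Rightarrow> ('b \<times> 'b) set) \<Rightarrow> 'b set" where
  "base_of h = (\<Union>a. Domain (h a) \<union> Range (h a))"

definition pf_antidomain :: "'b set \<Rightarrow> ('b \<times> 'b) set \<Rightarrow> ('b \<times> 'b) set" where
  "pf_antidomain X f = {(x, x) | x. x \<in> X \<and> x \<notin> Domain f}"

text \<open>h is a representation by partial functions: an injective homomorphism onto an
  algebra of partial functions (relational composition in diagrammatic order f O g).\<close>
definition representation_pf ::
  "('a \<Rightarrow> 'a \<Rightarrow> 'a) \<Rightarrow> ('a \<Rightarrow> 'a \<Rightarrow> 'a) \<Rightarrow> ('a \<Rightarrow> 'a) \<Rightarrow> ('a \<Rightarrow> ('b \<times> 'b) set) \<Rightarrow> bool" where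
  "representation_pf cmp meet ad h \<longleftrightarrow>
     inj h \<and> (\<forall>a. single_valued (h a)) \<and>
     (\<forall>a b. h (cmp a b) = h a O h b) \<and>
     (\<forall>a b. h (meet a b) = h a \<inter> h b) \<and>
     (\<forall>a. h (ad a) = pf_antidomain (base_of h) (h a))"

definition alg_le :: "('a \<Rightarrow> 'a \<Rightarrow> 'a) \<Rightarrow> 'a \<Rightarrow> 'a \<Rightarrow> bool" where
  "alg_le meet a b \<longleftrightarrow> meet a b = a"

text \<open>The least element is 0 = A(a) o a (for any a); x is nonzero iff x differs from A(x) o x.\<close>
definition alg_zero_elem :: "('a \<Rightarrow> 'a \<Rightarrow> 'a) \<Rightarrow> ('a \<Rightarrow> 'a) \<Rightarrow> 'a \<Rightarrow> bool" where
  "alg_zero_elem cmp ad x \<longleftrightarrow> x = cmp (ad x) x"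

definition alg_atom :: "('a \<Rightarrow> 'a \<Rightarrow> 'a) \<Rightarrow> ('a \<Rightarrow> 'a \<Rightarrow> 'a) \<Rightarrow> ('a \<Rightarrow> 'a) \<Rightarrow> 'a \<Rightarrow> bool" where
  "alg_atom cmp meet ad x \<longleftrightarrow>
     \<not> alg_zero_elem cmp ad x \<and>
     (\<forall>y. alg_le meet y x \<longrightarrow> alg_zero_elem cmp ad y \<or> y = x)"

definition alg_atomic :: "('a \<Rightarrow> 'a \<Rightarrow> 'a) \<Rightarrow> ('a \<Rightarrow> 'a \<Rightarrow> 'a) \<Rightarrow> ('a \<Rightarrow> 'a) \<Rightarrow> bool" where
  "alg_atomic cmp meet ad \<longleftrightarrow>
     (\<forall>a. \<not> alg_zero_elem cmp ad a \<longrightarrow> (\<exists>x. alg_atom cmp meet ad x \<and> alg_le meet x a))"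

definition is_join :: "('a \<Rightarrow> 'a \<Rightarrow> 'a) \<Rightarrow> 'a set \<Rightarrow> 'a \<Rightarrow> bool" where
  "is_join meet S j \<longleftrightarrow> (\<forall>s\<in>S. alg_le meet s j) \<and>
     (\<forall>u. (\<forall>s\<in>S. alg_le meet s u) \<longrightarrow> alg_le meet j u)"

definition compl_left_distr :: "('a \<Rightarrow> 'a \<Rightarrow> 'a) \<Rightarrow> ('a \<Rightarrow> 'a \<Rightarrow> 'a) \<Rightarrow> bool" where
  "compl_left_distr cmp meet \<longleftrightarrow>
     (\<forall>a S j. is_join meet S j \<longrightarrow> is_join meet ((\<lambda>s. cmp a s) ` S) (cmp a j))"

definition phi_sentence :: "('a \<Rightarrow> 'a \<Rightarrow> 'a) \<Rightarrow> ('a \<Rightarrow> 'a \<Rightarrow> 'a) \<Rightarrow> ('a \<Rightarrow> 'a) \<Rightarrow> bool" where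
  "phi_sentence cmp meet ad \<longleftrightarrow>
     (\<forall>a b c. (\<forall>x. alg_atom cmp meet ad x \<and> alg_le meet x b \<longrightarrow> alg_le meet (cmp a x) c)
        \<longrightarrow> alg_le meet (cmp a b) c)"

end

theory Submission
  imports Defs
begin

(* Transport everything along the representation h: the order becomes
   inclusion of partial functions, zero becomes the empty function, and A(u) o b becomes
   the restriction of b to the points outside the domain of u.  Two facts about joins
   then carry the argument:
   (1) in an atomic algebra, every b is the join of the atoms below it (anything of b
       not covered by an upper bound u is carved out as A(b /\ u) o b, which would
       contain an atom);
   (2) an atom below a join of S lies below some member of S (otherwise A(x) o j is a
       smaller upper bound of S).
   Since composition is monotone, a o j is always an upper bound of a o S.  Given phi,
   (2) shows it is the least one, so phi implies complete left-distributivity; this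
   direction needs no atomicity.  Conversely, complete left-distributivity applied to
   the join in (1) is exactly phi. *)

lemma single_valued_subset_agree:
  assumes "single_valued g" "f \<subseteq> g" "(p, q) \<in> g" "p \<in> Domain f"
  shows "(p, q) \<in> f"
  using assms unfolding single_valued_def by blast

context
  fixes cmp meet :: "'a \<Rightarrow> 'a \<Rightarrow> 'a" and ad :: "'a \<Rightarrow> 'a"
    and h :: "'a \<Rightarrow> ('b \<times> 'b) set"
  assumes rep: "representation_pf cmp meet ad h"
begin

lemma rep_inj: "inj h"
  and rep_single_valued: "single_valued (h a)"
  and rep_cmp: "h (cmp a b) = h a O h b"
  and rep_meet: "h (meet a b) = h a \<inter> h b"
  using rep unfolding representation_pf_def by auto

lemma rep_le: "alg_le meet a b \<longleftrightarrow> h a \<subseteq> h b"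
proof -
  have "meet a b = a \<longleftrightarrow> h (meet a b) = h a"
    using rep_inj by (auto dest: injD)
  then show ?thesis unfolding alg_le_def rep_meet by auto
qed

lemma rep_restrict: "h (cmp (ad u) b) = {(p, q). (p, q) \<in> h b \<and> p \<notin> Domain (h u)}"
proof -
  have ad_u: "h (ad u) = pf_antidomain (base_of h) (h u)"
    using rep unfolding representation_pf_def by auto
  show ?thesis unfolding rep_cmp ad_u pf_antidomain_def base_of_def by blast
qed

lemma rep_zero: "alg_zero_elem cmp ad x \<longleftrightarrow> h x = {}"
proof -
  have empty: "h (cmp (ad x) x) = {}" using rep_restrict[of x x] by auto
  have "x = cmp (ad x) x \<longleftrightarrow> h x = h (cmp (ad x) x)"
    using rep_inj by (auto dest: injD)
  then show ?thesis unfolding alg_zero_elem_def empty by simp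
qed

lemma rep_atom:
  "alg_atom cmp meet ad x \<longleftrightarrow> h x \<noteq> {} \<and> (\<forall>y. h y \<subseteq> h x \<longrightarrow> h y = {} \<or> y = x)"
  unfolding alg_atom_def rep_le rep_zero by simp

lemma cmp_mono_right: "alg_le meet b c \<Longrightarrow> alg_le meet (cmp a b) (cmp a c)"
  unfolding rep_le rep_cmp by (rule relcomp_mono) auto

lemma atom_le_of_overlap:
  assumes "alg_atom cmp meet ad x" "h x \<inter> h s \<noteq> {}"
  shows "alg_le meet x s"
proof -
  have "h (meet x s) \<subseteq> h x" "h (meet x s) \<noteq> {}" using assms(2) by (auto simp: rep_meet)
  then have "meet x s = x" using assms(1) rep_atom by blast
  then show ?thesis unfolding alg_le_def .
qed

lemma join_of_atoms_below:
  assumes atomic: "alg_atomic cmp meet ad"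
  shows "is_join meet {x. alg_atom cmp meet ad x \<and> alg_le meet x b} b"
  unfolding is_join_def
proof (intro conjI allI impI ballI)
  fix u assume upper: "\<forall>x\<in>{x. alg_atom cmp meet ad x \<and> alg_le meet x b}. alg_le meet x u"
  define rest where "rest = cmp (ad (meet b u)) b"
  have h_rest: "h rest = {(p, q). (p, q) \<in> h b \<and> p \<notin> Domain (h b \<inter> h u)}"
    unfolding rest_def rep_restrict rep_meet ..
  have "h rest = {}"
  proof (rule ccontr)
    assume "h rest \<noteq> {}"
    then obtain x where x: "alg_atom cmp meet ad x" "h x \<subseteq> h rest"
      using atomic unfolding alg_atomic_def rep_zero rep_le by blast
    then have "h x \<subseteq> h b" using h_rest by auto
    moreover have "h x \<subseteq> h u" using upper x(1) \<open>h x \<subseteq> h b\<close> by (auto simp: rep_le)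
    moreover have "h x \<noteq> {}" using x(1) rep_atom by auto
    ultimately show False using x(2) h_rest by fastforce
  qed
  have "h b \<subseteq> h u"
  proof
    fix z assume z: "z \<in> h b"
    obtain p q where pq: "z = (p, q)" by force
    have "p \<in> Domain (h b \<inter> h u)" using \<open>h rest = {}\<close> h_rest z pq by blast
    then have "(p, q) \<in> h b \<inter> h u"
      using single_valued_subset_agree[OF rep_single_valued _ z[unfolded pq]] by blast
    then show "z \<in> h u" using pq by simp
  qed
  then show "alg_le meet b u" by (simp add: rep_le)
qed auto

lemma atom_below_join_member:
  assumes join: "is_join meet S j" and x: "alg_atom cmp meet ad x" "alg_le meet x j"
  shows "\<exists>s\<in>S. alg_le meet x s"
proof (rule ccontr)
  assume "\<not> ?thesis"
  then have disjoint: "\<forall>s\<in>S. h x \<inter> h s = {}" using atom_le_of_overlap[OF x(1)] by blast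
  have xj: "h x \<subseteq> h j" using x(2) by (simp add: rep_le)
  have below_j: "\<And>s. s \<in> S \<Longrightarrow> h s \<subseteq> h j" using join by (auto simp: is_join_def rep_le)
  text \<open>Removing the domain of x from j still leaves an upper bound of S.\<close>
  have "h s \<subseteq> h (cmp (ad x) j)" if s: "s \<in> S" for s
  proof
    fix z assume z: "z \<in> h s"
    obtain p q where pq: "z = (p, q)" by force
    have "(p, q) \<in> h j" using below_j[OF s] z pq by auto
    moreover have "p \<notin> Domain (h x)"
      using single_valued_subset_agree[OF rep_single_valued xj \<open>(p, q) \<in> h j\<close>]
        disjoint s z pq by blast
    ultimately show "z \<in> h (cmp (ad x) j)" using pq by (simp add: rep_restrict)
  qed
  then have "h j \<subseteq> h (cmp (ad x) j)" using join by (auto simp: is_join_def rep_le)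
  moreover obtain z where "z \<in> h x" using x(1) rep_atom by auto
  ultimately show False using xj rep_restrict by (cases z) auto
qed

lemma phi_imp_compl_left_distr:
  assumes phi: "phi_sentence cmp meet ad"
  shows "compl_left_distr cmp meet"
  unfolding compl_left_distr_def
proof (intro allI impI)
  fix a S j assume join: "is_join meet S j"
  show "is_join meet ((\<lambda>s. cmp a s) ` S) (cmp a j)"
    unfolding is_join_def
  proof (intro conjI allI impI ballI)
    fix t assume "t \<in> (\<lambda>s. cmp a s) ` S"
    then show "alg_le meet t (cmp a j)"
      using join cmp_mono_right unfolding is_join_def by blast
  next
    fix u assume upper: "\<forall>t\<in>(\<lambda>s. cmp a s) ` S. alg_le meet t u"
    have "alg_le meet (cmp a x) u" if atom: "alg_atom cmp meet ad x" "alg_le meet x j" for x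
    proof -
      obtain s where "s \<in> S" "alg_le meet x s"
        using atom_below_join_member[OF join atom] by blast
      then show ?thesis
        using upper cmp_mono_right[of x s a] by (auto simp: rep_le)
    qed
    then show "alg_le meet (cmp a j) u" using phi unfolding phi_sentence_def by blast
  qed
qed

text \<open>In an atomic algebra, complete left-distributivity implies phi: apply it to the join
  of the atoms below b.\<close>
lemma compl_left_distr_imp_phi:
  assumes atomic: "alg_atomic cmp meet ad" and cld: "compl_left_distr cmp meet"
  shows "phi_sentence cmp meet ad"
  unfolding phi_sentence_def
proof (intro allI impI)
  fix a b c
  assume "\<forall>x. alg_atom cmp meet ad x \<and> alg_le meet x b \<longrightarrow> alg_le meet (cmp a x) c"
  moreover have "is_join meet ((\<lambda>x. cmp a x) ` {x. alg_atom cmp meet ad x \<and> alg_le meet x b})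
      (cmp a b)"
    using cld join_of_atoms_below[OF atomic] unfolding compl_left_distr_def by blast
  ultimately show "alg_le meet (cmp a b) c" unfolding is_join_def by blast
qed

end

theorem mainTheorem15:
  fixes cmp meet :: "'a \<Rightarrow> 'a \<Rightarrow> 'a" and ad :: "'a \<Rightarrow> 'a"
    and h :: "'a \<Rightarrow> ('b \<times> 'b) set"
  assumes "representation_pf cmp meet ad h"
    and "alg_atomic cmp meet ad"
  shows "compl_left_distr cmp meet \<longleftrightarrow> phi_sentence cmp meet ad"
  using compl_left_distr_imp_phi[OF assms] phi_imp_compl_left_distr[OF assms(1)] by blast

end
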